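(* Let $p$ be an integer with $p\leq-1$ or $p\geq2$, and let $r\geq1$ be an integer. For $p\leq -1$ define \[ b^{-}_{K_p,r}=-\frac{1}{r^2}\sum_{d\mid r}\mu\!\left(\tfrac{r}{d}\right)\binom{3d-1}{d-1},\qquad b^{+}_{K_p,r}=\frac{1}{r^2}\sum_{d\mid r}\mu\!\left(\tfrac{r}{d}\right)\binom{(2|p|+1)d-1}{d-1}, \] and for $p\geq2$ define \[ b^{-}_{K_p,r}=-\frac{1}{r^2}\sum_{d\mid r}\mu\!\left(\tfrac{r}{d}\right)(-1)^{d+1}\binom{2d-1}{d-1},\qquad b^{+}_{K_p,r}=\frac{1}{r^2}\sum_{d\mid r}\mu\!\left(\tfrac{r}{d}\right)(-1)^{d}\binom{(2p+2)d-1}{d-1}. \] Then $b^{-}_{K_p,r}$ and $b^{+}_{K_p,r}$ are integers.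
   Context: $\mu$ is the Möbius function and the sums run over positive divisors $d$ of $r$. (These are the extremal BPS invariants of the twist knots $K_p$ found by Garoufalidis–Kucharski–Sułkowski.) *)

theory Defs
  imports Complex_Main "HOL-Computational_Algebra.Squarefree" "HOL-Computational_Algebra.Primes"
begin

definition moebius :: "nat \<Rightarrow> int" where
  "moebius n = (if squarefree n then (-1) ^ card (prime_factors n) else 0)"

definition b_minus :: "int \<Rightarrow> nat \<Rightarrow> rat" where
  "b_minus p r =
    (if p \<le> -1 then
       - (1 / of_nat (r^2)) * (\<Sum>d | d dvd r. of_int (moebius (r div d)) * of_nat ((3*d - 1) choose (d - 1)))
     else
       - (1 / of_nat (r^2)) * (\<Sum>d | d dvd r. of_int (moebius (r div d)) * (-1)^(d+1) * of_nat ((2*d - 1) choose (d - 1))))"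

definition b_plus :: "int \<Rightarrow> nat \<Rightarrow> rat" where
  "b_plus p r =
    (if p \<le> -1 then
       (1 / of_nat (r^2)) * (\<Sum>d | d dvd r. of_int (moebius (r div d)) * of_nat (((2 * nat \<bar>p\<bar> + 1)*d - 1) choose (d - 1)))
     else
       (1 / of_nat (r^2)) * (\<Sum>d | d dvd r. of_int (moebius (r div d)) * (-1)^d * of_nat (((2 * nat p + 2)*d - 1) choose (d - 1))))"

end

theory Submission
  imports Defs
begin

text \<open>
  Write B(k, n) for the binomial coefficient (kn - 1 choose n - 1). Removing the factors divisible
  by a prime p from B(k, pm) (pm - 1)! = prod_{0<j<pm} (x + j), where x = (k - 1)pm, gives
  B(k, pm) prod_J j = B(k, m) prod_J (x + j), with J the integers in (0, pm) prime to p.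
  Pairing j with pm - j, the product (x + j)(x + pm - j) differs from j(pm - j) by
  x(x + pm) = k(k - 1)(pm)^2; hence B(k, pm) and B(k, m) agree modulo p^(2s) whenever p^s
  divides pm. Only for p = 2 and odd m is there an unpaired factor x + m = (2k - 1)m, which is
  harmless modulo 4 for odd k and is absorbed by the sign (-1)^d for even k.

  A Moebius sum over the divisors d of r of mu(r/d) g(d) only involves the d with r/d
  squarefree; pairing d with d/p it becomes a sum of mu(r/d)(g(d) - g(d/p)) over the d with
  p not dividing r/d, and such d are divisible by the full power of p in r. So every prime
  power p^v exactly dividing r contributes p^(2v), and r^2 divides the sum.
\<close>

lemma moebius_eq_0_if_prime_square_dvd:
  assumes "prime (p::nat)" "p^2 dvd n"
  shows "moebius n = 0"
proof -
  have "\<not> squarefree n"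
    using assms by (intro not_squarefreeI[of p]) auto
  thus ?thesis by (simp add: moebius_def)
qed

lemma moebius_prime_mult:
  assumes "prime (p::nat)" "\<not> p dvd q" "q > 0"
  shows "moebius (p * q) = - moebius q"
proof -
  have cop: "coprime p q" using assms prime_imp_coprime by blast
  have sq: "squarefree (p * q) \<longleftrightarrow> squarefree q"
    using squarefree_multD(2)[of p q] squarefree_mult_coprime[OF cop] squarefree_prime[OF assms(1)]
    by blast
  have "prime_factors (p * q) = insert p (prime_factors q)"
    using assms prime_factors_product[of p q] prime_prime_factors[OF assms(1)]
    by (auto simp: prime_gt_0_nat)
  moreover have "p \<notin> prime_factors q" using assms by auto
  ultimately have "card (prime_factors (p * q)) = Suc (card (prime_factors q))" by simp
  thus ?thesis unfolding moebius_def sq by simp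
qed

lemma moebius_divisor_sum_prime_cofactor:
  fixes g :: "nat \<Rightarrow> int"
  assumes p: "prime p" and r: "r > 0" "p dvd r"
  shows "(\<Sum>e | e dvd r \<and> p dvd r div e \<and> \<not> p^2 dvd r div e. moebius (r div e) * g e)
       = (\<Sum>d | d dvd r \<and> \<not> p dvd r div d. - moebius (r div d) * g (d div p))"
proof (rule sum.reindex_bij_witness[where i = "\<lambda>d. d div p" and j = "\<lambda>e. p * e"])
  have p0: "p > 0" using p prime_gt_0_nat by blast
  {
    fix d assume "d \<in> {d. d dvd r \<and> \<not> p dvd r div d}"
    hence "d dvd r" "\<not> p dvd r div d" by auto
    then obtain q where q: "r = d * q" "\<not> p dvd q" by (metis dvd_mult_div_cancel)
    hence "p dvd d" using p r(2) prime_dvd_mult_iff by blast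
    then obtain e where e: "d = p * e" by blast
    show "p * (d div p) = d" using e p0 by simp
    have "r div e = p * q" using q e p0 r(1) by auto
    moreover have "\<not> p^2 dvd p * q" using q p0 by (simp add: power2_eq_square)
    ultimately show "d div p \<in> {e. e dvd r \<and> p dvd r div e \<and> \<not> p^2 dvd r div e}"
      using q e p0 by auto
  next
    fix e assume "e \<in> {e. e dvd r \<and> p dvd r div e \<and> \<not> p^2 dvd r div e}"
    hence "e dvd r" "p dvd r div e" "\<not> p^2 dvd r div e" by auto
    then obtain q where q: "r = e * (p * q)" "\<not> p dvd q"
      by (metis dvd_mult_div_cancel dvdE mult_dvd_mono dvd_refl power2_eq_square)
    have "q > 0" using q r(1) by (cases q) auto
    show "p * e div p = e" using p0 by simp
    show "p * e \<in> {d. d dvd r \<and> \<not> p dvd r div d}" using q p0 r(1) by auto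
    show "- moebius (r div (p * e)) * g (p * e div p) = moebius (r div e) * g e"
      using moebius_prime_mult[OF p q(2) \<open>q > 0\<close>] q p0 r(1) by simp
  }
qed

lemma moebius_divisor_sum_prime_split:
  fixes g :: "nat \<Rightarrow> int"
  assumes p: "prime p" and r: "r > 0" "p dvd r"
  shows "(\<Sum>d | d dvd r. moebius (r div d) * g d)
       = (\<Sum>d | d dvd r \<and> \<not> p dvd r div d. moebius (r div d) * (g d - g (d div p)))"
proof -
  define h where "h d = moebius (r div d) * g d" for d
  define A where "A = {d. d dvd r \<and> \<not> p dvd r div d}"
  define B where "B = {d. d dvd r \<and> p dvd r div d \<and> \<not> p^2 dvd r div d}"
  define C where "C = {d. d dvd r \<and> p^2 dvd r div d}"
  have fin: "finite A" "finite B" "finite C"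
    using r unfolding A_def B_def C_def by auto
  have "{d. d dvd r} = A \<union> B \<union> C"
    unfolding A_def B_def C_def by (auto intro: dvd_trans[of p "p^2"])
  moreover have "A \<inter> B = {}" "(A \<union> B) \<inter> C = {}"
    unfolding A_def B_def C_def by (auto intro: dvd_trans[of p "p^2"])
  ultimately have "sum h {d. d dvd r} = sum h A + sum h B + sum h C"
    using fin by (simp add: sum.union_disjoint)
  moreover have "sum h C = 0"
    unfolding C_def h_def using moebius_eq_0_if_prime_square_dvd[OF p] by simp
  moreover have "sum h B = (\<Sum>d\<in>A. - moebius (r div d) * g (d div p))"
    unfolding h_def A_def B_def by (rule moebius_divisor_sum_prime_cofactor[OF p r])
  ultimately have "sum h {d. d dvd r} = (\<Sum>d\<in>A. h d - moebius (r div d) * g (d div p))"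
    by (simp add: sum_subtractf sum_negf)
  thus ?thesis unfolding h_def A_def by (simp add: algebra_simps)
qed

lemma moebius_divisor_sum_prime_power_dvd:
  fixes g :: "nat \<Rightarrow> int"
  assumes p: "prime p" and r: "r > 0"
    and cong: "\<And>m s. m > 0 \<Longrightarrow> p^s dvd p * m \<Longrightarrow> int p^(2*s) dvd g (p * m) - g m"
  shows "int p^(2 * multiplicity p r) dvd (\<Sum>d | d dvd r. moebius (r div d) * g d)"
proof (cases "p dvd r")
  case False
  thus ?thesis by (simp add: not_dvd_imp_multiplicity_0)
next
  case True
  define s where "s = multiplicity p r"
  have "int p^(2*s) dvd moebius (r div d) * (g d - g (d div p))"
    if "d dvd r" "\<not> p dvd r div d" for d
  proof -
    define q where "q = r div d"
    have q: "r = d * q" "\<not> p dvd q" using that unfolding q_def by simp_all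
    have "coprime (p^s) q" using p q(2) by (simp add: prime_imp_coprime)
    moreover have "p^s dvd d * q" using q(1) multiplicity_dvd[of p r] unfolding s_def by simp
    ultimately have "p^s dvd d" by (simp add: coprime_dvd_mult_left_iff)
    have "p dvd d" using True q p prime_dvd_mult_iff by blast
    then obtain e where e: "d = p * e" by blast
    have "e > 0" using e q(1) r by (cases e) auto
    hence "int p^(2*s) dvd g (p * e) - g e"
      using cong \<open>p^s dvd d\<close> e by blast
    thus ?thesis using e p prime_gt_0_nat by simp
  qed
  hence "int p^(2*s) dvd (\<Sum>d | d dvd r \<and> \<not> p dvd r div d. moebius (r div d) * (g d - g (d div p)))"
    by (intro dvd_sum) auto
  thus ?thesis using moebius_divisor_sum_prime_split[OF p r True] unfolding s_def by simp
qed

lemma int_dvd_if_prime_powers_dvd: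
  fixes n :: nat and z :: int
  assumes "n > 0" "\<And>p. prime p \<Longrightarrow> int (p ^ multiplicity p n) dvd z"
  shows "int n dvd z"
proof (cases "z = 0")
  case False
  have "n dvd nat \<bar>z\<bar>"
  proof (rule multiplicity_le_imp_dvd)
    fix p :: nat assume p: "prime p"
    have "p ^ multiplicity p n dvd nat \<bar>z\<bar>" using assms(2)[OF p] by simp
    thus "multiplicity p n \<le> multiplicity p (nat \<bar>z\<bar>)"
      using False p by (intro multiplicity_geI) auto
  qed (use assms(1) in simp)
  thus ?thesis by simp
qed simp

lemma moebius_divisor_sum_square_dvd:
  fixes g :: "nat \<Rightarrow> int"
  assumes r: "r > 0"
    and cong: "\<And>p m s. prime p \<Longrightarrow> m > 0 \<Longrightarrow> p^s dvd p * m \<Longrightarrow> int p^(2*s) dvd g (p * m) - g m"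
  shows "int (r^2) dvd (\<Sum>d | d dvd r. moebius (r div d) * g d)"
proof (rule int_dvd_if_prime_powers_dvd)
  fix p :: nat assume p: "prime p"
  have "multiplicity p (r^2) = 2 * multiplicity p r"
    using p r by (simp add: prime_elem_multiplicity_power_distrib)
  thus "int (p ^ multiplicity p (r^2)) dvd (\<Sum>d | d dvd r. moebius (r div d) * g d)"
    using moebius_divisor_sum_prime_power_dvd[where g = g, OF p r cong[OF p]] by simp
qed (use r in simp)

lemma prod_reflection_pairs_dvd:
  fixes J :: "nat set" and T :: nat and x Q :: int
  assumes "finite J" "\<forall>j\<in>J. j < T \<and> T - j \<in> J \<and> 2 * j \<noteq> T" "Q dvd x * (x + int T)"
  shows "Q dvd (\<Prod>j\<in>J. x + int j) - (\<Prod>j\<in>J. int j)"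
  using assms(1,2)
proof (induction "card J" arbitrary: J rule: less_induct)
  case less
  show ?case
  proof (cases "J = {}")
    case False
    then obtain j where j: "j \<in> J" by blast
    define j' where "j' = T - j"
    have jT: "j < T" "j' \<in> J" "j' \<noteq> j" using less.prems j unfolding j'_def by auto
    define J' where "J' = J - {j, j'}"
    have J: "J = insert j (insert j' J')" "j \<notin> insert j' J'" "j' \<notin> J'" "finite J'"
      using j jT less.prems(1) unfolding J'_def by auto
    have "\<forall>i\<in>J'. i < T \<and> T - i \<in> J' \<and> 2 * i \<noteq> T"
      using less.prems(2) jT unfolding J'_def j'_def by auto
    moreover have "card J' < card J" using J by simp
    ultimately have IH: "Q dvd (\<Prod>i\<in>J'. x + int i) - (\<Prod>i\<in>J'. int i)"
      using less.hyps J(4) by blast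
    have "(x + int j) * (x + int j') = x * (x + int T) + int j * int j'"
      using jT unfolding j'_def by (simp add: of_nat_diff algebra_simps)
    hence pair: "Q dvd (x + int j) * (x + int j') - int j * int j'"
      using assms(3) by simp
    have "(\<Prod>i\<in>J. x + int i) - (\<Prod>i\<in>J. int i)
        = ((x + int j) * (x + int j') - int j * int j') * (\<Prod>i\<in>J'. x + int i)
          + int j * int j' * ((\<Prod>i\<in>J'. x + int i) - (\<Prod>i\<in>J'. int i))"
      using J by (simp add: algebra_simps)
    thus ?thesis using pair IH by simp
  qed simp
qed

lemma binomial_mult_fact_prod:
  "int ((a + b) choose b) * fact b = (\<Prod>j\<in>{1..b}. int a + int j)"
proof (induction b)
  case (Suc b)
  have "int ((a + Suc b) choose Suc b) * fact (Suc b)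
      = int (Suc b * (Suc (a + b) choose Suc b)) * fact b"
    by (simp add: algebra_simps)
  also have "\<dots> = int (Suc (a + b)) * (int ((a + b) choose b) * fact b)"
    unfolding Suc_times_binomial by (simp add: algebra_simps)
  also have "\<dots> = (\<Prod>j\<in>{1..Suc b}. int a + int j)"
    using Suc by (simp add: prod.nat_ivl_Suc' algebra_simps)
  finally show ?case .
qed simp

definition nonmultiples :: "nat \<Rightarrow> nat \<Rightarrow> nat set" where
  "nonmultiples p n = {j \<in> {1..<n}. \<not> p dvd j}"

lemma finite_nonmultiples [simp]: "finite (nonmultiples p n)"
  by (simp add: nonmultiples_def)

lemma prod_split_multiples:
  fixes f :: "nat \<Rightarrow> 'a::comm_monoid_mult"
  assumes "p > 0"
  shows "(\<Prod>j\<in>{1..<p * m}. f j) = (\<Prod>j\<in>nonmultiples p (p * m). f j) * (\<Prod>i\<in>{1..<m}. f (p * i))"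
proof -
  have "{1..<p * m} = nonmultiples p (p * m) \<union> (\<lambda>i. p * i) ` {1..<m}"
    using assms by (auto simp: nonmultiples_def image_iff elim!: dvdE)
  moreover have "nonmultiples p (p * m) \<inter> (\<lambda>i. p * i) ` {1..<m} = {}"
    by (auto simp: nonmultiples_def)
  moreover have "inj_on (\<lambda>i. p * i) {1..<m}"
    using assms by (auto simp: inj_on_def)
  ultimately show ?thesis
    by (simp add: prod.union_disjoint prod.reindex)
qed

lemma nonmultiples_reflect:
  assumes "p dvd n" "j \<in> nonmultiples p n"
  shows "j < n" "n - j \<in> nonmultiples p n"
proof -
  show "j < n" using assms(2) by (simp add: nonmultiples_def)
  moreover have "\<not> p dvd n - j"
  proof
    assume "p dvd n - j"
    with assms(1) have "p dvd n - (n - j)" by (rule dvd_diff_nat)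
    thus False using \<open>j < n\<close> assms(2) by (simp add: nonmultiples_def)
  qed
  ultimately show "n - j \<in> nonmultiples p n"
    using assms(2) by (auto simp: nonmultiples_def)
qed

lemma coprime_prime_power_prod_nonmultiples:
  assumes "prime p"
  shows "coprime (int p ^ s) (\<Prod>j\<in>nonmultiples p n. int j)"
proof -
  have "prime (int p)" using assms by simp
  hence "\<not> int p dvd (\<Prod>j\<in>nonmultiples p n. int j)"
    by (auto simp: prime_dvd_prod_iff nonmultiples_def)
  thus ?thesis using prime_imp_coprime[OF \<open>prime (int p)\<close>] by simp
qed

lemma fact_pred_eq_prod_int: "(fact (n - 1) :: int) = (\<Prod>j\<in>{1..<n}. int j)"
  by (cases n) (simp_all add: fact_prod atLeastLessThanSuc_atLeastAtMost)

definition binom_kn :: "nat \<Rightarrow> nat \<Rightarrow> int" where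
  "binom_kn k n = int ((k * n - 1) choose (n - 1))"

lemma binom_kn_mult_fact:
  assumes "k > 0"
  shows "binom_kn k m * fact (m - 1) = (\<Prod>i\<in>{1..<m}. int ((k - 1) * m) + int i)"
proof (cases "m = 0")
  case False
  have "k * m - 1 = (k - 1) * m + (m - 1)" using assms False by (cases k) auto
  moreover have "{1..<m} = {1..m - 1}" using False by auto
  ultimately show ?thesis
    unfolding binom_kn_def using binomial_mult_fact_prod[of "(k - 1) * m" "m - 1"] by simp
qed (simp add: binom_kn_def)

lemma binom_kn_mult_prod_nonmultiples:
  assumes k: "k > 0" and p: "p > 0"
  shows "binom_kn k (p * m) * (\<Prod>j\<in>nonmultiples p (p * m). int j)
       = binom_kn k m * (\<Prod>j\<in>nonmultiples p (p * m). int ((k - 1) * (p * m)) + int j)"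
proof -
  define N where "N = nonmultiples p (p * m)"
  define x where "x = int ((k - 1) * (p * m))"
  define c :: int where "c = int p ^ (m - 1) * fact (m - 1)"
  have "x = int p * int ((k - 1) * m)"
    unfolding x_def by (metis mult.left_commute of_nat_mult)
  hence "(\<Prod>i\<in>{1..<m}. x + int (p * i)) = (\<Prod>i\<in>{1..<m}. int p * (int ((k - 1) * m) + int i))"
    by (simp add: distrib_left)
  also have "\<dots> = int p ^ (m - 1) * (\<Prod>i\<in>{1..<m}. int ((k - 1) * m) + int i)"
    by (simp add: prod.distrib)
  also have "\<dots> = c * binom_kn k m"
    unfolding c_def binom_kn_mult_fact[OF k, symmetric] by (simp only: ac_simps)
  finally have multiples: "(\<Prod>i\<in>{1..<m}. x + int (p * i)) = c * binom_kn k m" .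
  have "binom_kn k (p * m) * fact (p * m - 1) = (\<Prod>j\<in>{1..<p * m}. x + int j)"
    unfolding x_def by (rule binom_kn_mult_fact[OF k])
  also have "\<dots> = (\<Prod>j\<in>N. x + int j) * (c * binom_kn k m)"
    unfolding N_def prod_split_multiples[OF p] multiples ..
  finally have lhs: "binom_kn k (p * m) * fact (p * m - 1) = (\<Prod>j\<in>N. x + int j) * (c * binom_kn k m)" .
  have "(fact (p * m - 1) :: int) = (\<Prod>j\<in>N. int j) * c"
    unfolding fact_pred_eq_prod_int N_def c_def prod_split_multiples[OF p]
    by (simp add: prod.distrib)
  moreover have "c \<noteq> 0" using p by (simp add: c_def)
  ultimately show ?thesis
    using lhs unfolding N_def[symmetric] x_def[symmetric] by (simp add: ac_simps)
qed

lemma prime_power_square_dvd_shift_product: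
  fixes k n s p :: nat
  assumes "k > 0" "p^s dvd n"
  shows "int p^(2*s) dvd int ((k - 1) * n) * (int ((k - 1) * n) + int n)"
proof -
  have "int ((k - 1) * n) * (int ((k - 1) * n) + int n) = (int k - 1) * int k * int n ^ 2"
    using assms(1) by (simp add: of_nat_diff power2_eq_square algebra_simps)
  moreover have "int (p^s) dvd int n"
    using assms(2) by (simp only: int_dvd_int_iff)
  hence "int (p^s) ^ 2 dvd int n ^ 2" by (rule dvd_power_same)
  ultimately show ?thesis by (simp add: power_mult[symmetric] mult.commute)
qed

lemma binom_kn_prime_mult_cong:
  assumes p: "prime p" and k: "k > 0" and ps: "p^s dvd p * m" and not_double_odd: "\<not> (p = 2 \<and> odd m)"
  shows "int p^(2*s) dvd binom_kn k (p * m) - binom_kn k m"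
proof -
  define N where "N = nonmultiples p (p * m)"
  define x where "x = int ((k - 1) * (p * m))"
  have "p > 0" using p prime_gt_0_nat by blast
  have "2 * j \<noteq> p * m" if "j \<in> N" for j
  proof
    assume half: "2 * j = p * m"
    have "\<not> p dvd j" using that by (simp add: N_def nonmultiples_def)
    moreover have "p dvd 2 * j" using half by simp
    ultimately have "p = 2" using p prime_dvd_mult_nat primes_dvd_imp_eq two_is_prime_nat by blast
    thus False using half \<open>\<not> p dvd j\<close> not_double_odd by simp
  qed
  hence "\<forall>j\<in>N. j < p * m \<and> p * m - j \<in> N \<and> 2 * j \<noteq> p * m"
    using nonmultiples_reflect[of p "p * m"] unfolding N_def by auto
  moreover have "int p^(2*s) dvd x * (x + int (p * m))"
    unfolding x_def using prime_power_square_dvd_shift_product[OF k ps] .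
  ultimately have "int p^(2*s) dvd (\<Prod>j\<in>N. x + int j) - (\<Prod>j\<in>N. int j)"
    by (rule prod_reflection_pairs_dvd[OF finite_nonmultiples[of p "p * m", folded N_def]])
  moreover have "(binom_kn k (p * m) - binom_kn k m) * (\<Prod>j\<in>N. int j)
      = binom_kn k m * ((\<Prod>j\<in>N. x + int j) - (\<Prod>j\<in>N. int j))"
    using binom_kn_mult_prod_nonmultiples[OF k \<open>p > 0\<close>, of m]
    unfolding N_def x_def by (simp add: algebra_simps)
  ultimately have "int p^(2*s) dvd (binom_kn k (p * m) - binom_kn k m) * (\<Prod>j\<in>N. int j)"
    by (metis dvd_mult)
  thus ?thesis
    using coprime_prime_power_prod_nonmultiples[OF p] coprime_dvd_mult_left_iff unfolding N_def by blast
qed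

lemma binom_kn_double_odd_cong:
  assumes k: "k > 0" and m: "odd m"
  shows "4 dvd binom_kn k (2 * m) - (2 * int k - 1) * binom_kn k m"
proof -
  define N where "N = nonmultiples 2 (2 * m) - {m}"
  define x where "x = int ((k - 1) * (2 * m))"
  have m_mem: "m \<in> nonmultiples 2 (2 * m)"
    using m odd_pos[OF m] by (auto simp: nonmultiples_def)
  have "\<forall>j\<in>N. j < 2 * m \<and> 2 * m - j \<in> N \<and> 2 * j \<noteq> 2 * m"
    using nonmultiples_reflect[of 2 "2 * m"] unfolding N_def by fastforce
  moreover have "int 2^(2*1) dvd x * (x + int (2 * m))"
    unfolding x_def by (rule prime_power_square_dvd_shift_product[OF k]) simp
  ultimately have pairs: "int 2^(2*1) dvd (\<Prod>j\<in>N. x + int j) - (\<Prod>j\<in>N. int j)"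
    by (rule prod_reflection_pairs_dvd[rotated]) (simp add: N_def)
  have "x = (int k - 1) * (2 * int m)"
    unfolding x_def using k by (simp add: of_nat_diff)
  hence "x + int m = (2 * int k - 1) * int m" by (simp add: algebra_simps)
  moreover have "(\<Prod>j\<in>nonmultiples 2 (2 * m). f j) = f m * (\<Prod>j\<in>N. f j)" for f :: "nat \<Rightarrow> int"
    unfolding N_def using prod.remove[OF finite_nonmultiples m_mem] .
  ultimately have identity: "binom_kn k (2 * m) * (int m * (\<Prod>j\<in>N. int j))
      = binom_kn k m * ((2 * int k - 1) * int m * (\<Prod>j\<in>N. x + int j))"
    using binom_kn_mult_prod_nonmultiples[OF k, of 2 m] unfolding x_def[symmetric] by simp
  have "int 2^(2*1) dvd binom_kn k m * ((2 * int k - 1) * int m) * ((\<Prod>j\<in>N. x + int j) - (\<Prod>j\<in>N. int j))"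
    by (rule dvd_mult[OF pairs])
  also have "\<dots> = binom_kn k (2 * m) * (int m * (\<Prod>j\<in>N. int j))
        - (2 * int k - 1) * binom_kn k m * (int m * (\<Prod>j\<in>N. int j))"
    unfolding identity by (simp add: algebra_simps)
  also have "\<dots> = (binom_kn k (2 * m) - (2 * int k - 1) * binom_kn k m) * (\<Prod>j\<in>nonmultiples 2 (2 * m). int j)"
    unfolding N_def prod.remove[OF finite_nonmultiples m_mem] by (simp add: algebra_simps)
  finally show ?thesis
    using coprime_prime_power_prod_nonmultiples[of 2 "2*1" "2 * m"] by (simp add: coprime_dvd_mult_left_iff)
qed

lemma two_power_dvd_double_odd:
  assumes "odd m" "2^s dvd 2 * (m::nat)"
  shows "(2::int)^(2*s) dvd 4"
proof -
  have "s \<le> 1"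
  proof (rule ccontr)
    assume "\<not> s \<le> 1"
    hence "(2::nat)^2 dvd 2^s" by (intro le_imp_power_dvd) auto
    hence "4 dvd 2 * m" using assms(2) dvd_trans by fastforce
    thus False using assms(1) by presburger
  qed
  hence "(2::int)^(2*s) dvd 2^2" by (intro le_imp_power_dvd) auto
  thus ?thesis by simp
qed

lemma binom_kn_odd_cong:
  assumes k: "odd k" and p: "prime p" and ps: "p^s dvd p * m"
  shows "int p^(2*s) dvd binom_kn k (p * m) - binom_kn k m"
proof (cases "p = 2 \<and> odd m")
  case True
  have "binom_kn k (2 * m) - binom_kn k m
      = (binom_kn k (2 * m) - (2 * int k - 1) * binom_kn k m) + (2 * int k - 2) * binom_kn k m"
    by (simp add: algebra_simps)
  moreover have "4 dvd binom_kn k (2 * m) - (2 * int k - 1) * binom_kn k m"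
    using binom_kn_double_odd_cong[of k m] True k by (simp add: odd_pos)
  moreover have "(4::int) dvd (2 * int k - 2) * binom_kn k m"
    using k by (auto elim!: oddE)
  ultimately have "4 dvd binom_kn k (2 * m) - binom_kn k m" by (metis dvd_add)
  thus ?thesis using True ps two_power_dvd_double_odd[of m s] dvd_trans by auto
next
  case False
  thus ?thesis using binom_kn_prime_mult_cong[OF p _ ps] k by (simp add: odd_pos)
qed

lemma binom_kn_even_cong:
  assumes k: "even k" "k > 0" and p: "prime p" and ps: "p^s dvd p * m"
  shows "int p^(2*s) dvd (-1)^(p * m) * binom_kn k (p * m) - (-1)^m * binom_kn k m"
proof (cases "p = 2 \<and> odd m")
  case True
  have "(-1)^(p * m) * binom_kn k (p * m) - (-1)^m * binom_kn k m
      = (binom_kn k (2 * m) - (2 * int k - 1) * binom_kn k m) + 2 * int k * binom_kn k m"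
    using True by (simp add: algebra_simps)
  moreover have "4 dvd binom_kn k (2 * m) - (2 * int k - 1) * binom_kn k m"
    using binom_kn_double_odd_cong[OF k(2)] True by simp
  moreover have "(4::int) dvd 2 * int k * binom_kn k m"
    using k(1) by (auto elim!: evenE)
  ultimately have "4 dvd (-1)^(p * m) * binom_kn k (p * m) - (-1)^m * binom_kn k m" by (metis dvd_add)
  thus ?thesis using True ps two_power_dvd_double_odd[of m s] dvd_trans by auto
next
  case False
  have "even (p * m) \<longleftrightarrow> even m"
    using False prime_ge_2_nat[OF p] prime_odd_nat[OF p] by auto
  hence "(-1::int)^(p * m) = (-1)^m" by (simp add: minus_one_power_iff)
  thus ?thesis using binom_kn_prime_mult_cong[OF p k(2) ps False]
    by (simp add: right_diff_distrib[symmetric])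
qed

lemma divisor_sum_binomial_odd_Ints:
  assumes "odd k" "r > 0"
  shows "(1 / of_nat (r^2)) *
    (\<Sum>d | d dvd r. of_int (moebius (r div d)) * of_nat ((k * d - 1) choose (d - 1)) :: rat) \<in> \<int>"
proof -
  have "int (r^2) dvd (\<Sum>d | d dvd r. moebius (r div d) * binom_kn k d)"
    using moebius_divisor_sum_square_dvd[OF assms(2)] binom_kn_odd_cong[OF assms(1)] by blast
  hence "(of_int (\<Sum>d | d dvd r. moebius (r div d) * binom_kn k d) / of_int (int (r^2)) :: rat) \<in> \<int>"
    by (rule of_int_divide_in_Ints)
  thus ?thesis by (simp add: binom_kn_def of_int_sum)
qed

lemma divisor_sum_binomial_even_Ints:
  assumes "even k" "k > 0" "r > 0"
  shows "(1 / of_nat (r^2)) *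
    (\<Sum>d | d dvd r. of_int (moebius (r div d)) * (-1)^d * of_nat ((k * d - 1) choose (d - 1)) :: rat) \<in> \<int>"
proof -
  have "int (r^2) dvd (\<Sum>d | d dvd r. moebius (r div d) * ((-1)^d * binom_kn k d))"
    by (rule moebius_divisor_sum_square_dvd[OF assms(3), where g = "\<lambda>d. (-1)^d * binom_kn k d"])
      (blast intro: binom_kn_even_cong[OF assms(1,2)])
  hence "(of_int (\<Sum>d | d dvd r. moebius (r div d) * ((-1)^d * binom_kn k d)) / of_int (int (r^2)) :: rat) \<in> \<int>"
    by (rule of_int_divide_in_Ints)
  thus ?thesis by (simp add: binom_kn_def of_int_sum mult.assoc)
qed

theorem theorem6p1:
  fixes p :: int and r :: nat
  assumes "p \<le> -1 \<or> p \<ge> 2"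
    and "r \<ge> 1"
  shows "b_minus p r \<in> \<int> \<and> b_plus p r \<in> \<int>"
proof (cases "p \<le> -1")
  case True
  have "odd (3::nat)" "odd (2 * nat \<bar>p\<bar> + 1)" by simp_all
  thus ?thesis
    using True assms(2) divisor_sum_binomial_odd_Ints[of 3 r] divisor_sum_binomial_odd_Ints[of "2 * nat \<bar>p\<bar> + 1" r]
    unfolding b_minus_def b_plus_def by simp
next
  case False
  have sign: "(\<Sum>d | d dvd r. of_int (moebius (r div d)) * (-1)^(d+1) * f d)
      = - (\<Sum>d | d dvd r. of_int (moebius (r div d)) * (-1)^d * f d :: rat)" for f
    by (simp add: sum_negf[symmetric])
  have "even (2::nat)" "even (2 * nat p + 2)" by simp_all
  thus ?thesis
    using False assms(2) divisor_sum_binomial_even_Ints[of 2 r] divisor_sum_binomial_even_Ints[of "2 * nat p + 2" r]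
    unfolding b_minus_def b_plus_def sign by simp
qed

end
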